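(* For every positive integer $r$, $\displaystyle \bar T(\{1\}_r)=\frac{(-1)^r}{r!}\left(\frac{\pi}{2}\right)^r.$
   Context: $\{1\}_r$ denotes the sequence of $r$ ones. $\bar T(\{1\}_r):=2^r\sum_{0<n_1<\cdots<n_r}\frac{(-1)^{n_r}}{(2n_1-1)(2n_2-2)\cdots(2n_r-r)}$ (conditionally convergent). *)

theory Defs
  imports Complex_Main
begin

text \<open>Index tuples (n_1,...,n_r) with 0 < n_1 < ... < n_r = m, represented as lists
  (list position j corresponds to index j+1).\<close>
definition Tbar_tuples :: "nat \<Rightarrow> nat \<Rightarrow> nat list set" where
  "Tbar_tuples r m = {ns. length ns = r \<and> sorted_wrt (<) ns \<and> (\<forall>x\<in>set ns. 0 < x) \<and> last ns = m}"

definition Tbar_term :: "nat \<Rightarrow> nat \<Rightarrow> real" where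
  "Tbar_term r m = 2 ^ r * (\<Sum>ns\<in>Tbar_tuples r m.
      (-1) ^ m / (\<Prod>j<r. 2 * real (ns ! j) - real (j + 1)))"

end

theory Submission
  imports Defs "HOL-Analysis.Uniform_Limit"
begin

text \<open>Grouping the series by its outermost index, the inner sums \<open>b\<^sub>r(m)\<close> (here \<open>Tbar_coeff r m\<close>)
  obey \<open>b\<^sub>r\<^sub>+\<^sub>1(m) = (\<Sum>n<m. b\<^sub>r(n)) / (2m - r - 1)\<close>, which is exactly the coefficient recursion of the
  differential equation \<open>(1 + t\<^sup>2) A\<^sub>r\<^sub>+\<^sub>1' = - A\<^sub>r\<close>, \<open>A\<^sub>r\<^sub>+\<^sub>1(0) = 0\<close>, \<open>A\<^sub>0 = 1\<close> for the series
  \<open>A\<^sub>r(t) = \<Sum>m. (-1)\<^sup>m b\<^sub>r(m) t\<^bsup>2m-r\<^esup>\<close>; its solution is \<open>(- arctan t)\<^sup>r / r!\<close>, and evaluating at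
  \<open>t = 1\<close> gives the theorem. Convergence at the boundary point is obtained by induction on \<open>r\<close>: the
  partial sums of \<open>A\<^sub>r\<^sub>+\<^sub>1\<close> satisfy the differential equation up to the term
  \<open>(-1)\<^sup>N t\<^bsup>2N-r\<^esup> \<Sum>n<N. b\<^sub>r(n)\<close>, whose integral over \<open>[0, 1]\<close> is \<open>O(1/\<surd>N)\<close> because
  \<open>\<Sum>n<N. b\<^sub>r(n) = O(\<surd>N)\<close>, so the partial sums converge uniformly on \<open>[0, 1]\<close>.\<close>

fun Tbar_coeff :: "nat \<Rightarrow> nat \<Rightarrow> real" where
  "Tbar_coeff 0 m = (if m = 0 then 1 else 0)"
| "Tbar_coeff (Suc r) m = (\<Sum>n<m. Tbar_coeff r n) / (2 * real m - real (Suc r))"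

lemma Tbar_coeff_eq_0: "m < r \<Longrightarrow> Tbar_coeff r m = 0"
  by (induction r arbitrary: m) (auto intro!: sum.neutral)

lemma Tbar_coeff_nonneg: "Tbar_coeff r m \<ge> 0"
proof (induction r arbitrary: m)
  case 0
  then show ?case by simp
next
  case (Suc r)
  show ?case
  proof (cases "m < Suc r")
    case True
    then show ?thesis by (simp only: Tbar_coeff_eq_0)
  next
    case False
    then show ?thesis using Suc by (auto intro!: divide_nonneg_pos sum_nonneg)
  qed
qed

lemma sorted_wrt_less_le_last:
  "sorted_wrt (<) (xs :: 'a :: order list) \<Longrightarrow> x \<in> set xs \<Longrightarrow> x \<le> last xs"
  by (induction xs rule: rev_induct) (auto simp: sorted_wrt_append)

lemma finite_Tbar_tuples: "finite (Tbar_tuples r m)"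
proof (rule finite_subset)
  show "Tbar_tuples r m \<subseteq> {xs. set xs \<subseteq> {..m} \<and> length xs = r}"
    unfolding Tbar_tuples_def using sorted_wrt_less_le_last by fastforce
qed (simp add: finite_lists_length_eq)

lemma Tbar_tuples_1: "Tbar_tuples (Suc 0) m = (if m > 0 then {[m]} else {})"
  unfolding Tbar_tuples_def by (auto simp: length_Suc_conv)

lemma Tbar_tuples_Suc:
  assumes "r \<ge> 1"
  shows "Tbar_tuples (Suc r) m = (\<lambda>ns. ns @ [m]) ` (\<Union>n<m. Tbar_tuples r n)"
proof (intro equalityI subsetI)
  fix ns assume "ns \<in> Tbar_tuples (Suc r) m"
  then have len: "length ns = Suc r" and sorted: "sorted_wrt (<) ns"
    and pos: "\<forall>x\<in>set ns. 0 < x" and last: "last ns = m"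
    unfolding Tbar_tuples_def by auto
  define xs where "xs = butlast ns"
  have ns_eq: "ns = xs @ [m]"
    using len last unfolding xs_def by (metis append_butlast_last_id list.size(3) nat.distinct(1))
  have length_xs: "length xs = r"
    using len unfolding xs_def by simp
  moreover have "xs \<noteq> []"
    using length_xs assms by auto
  moreover have "sorted_wrt (<) xs" "\<forall>x\<in>set xs. x < m"
    using sorted unfolding ns_eq by (auto simp: sorted_wrt_append)
  ultimately have "last xs < m" "xs \<in> Tbar_tuples r (last xs)"
    using pos unfolding Tbar_tuples_def ns_eq by auto
  then show "ns \<in> (\<lambda>ns. ns @ [m]) ` (\<Union>n<m. Tbar_tuples r n)"
    using ns_eq by blast
next
  fix ys assume "ys \<in> (\<lambda>ns. ns @ [m]) ` (\<Union>n<m. Tbar_tuples r n)"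
  then obtain ns n where ys: "ys = ns @ [m]" and "n < m" and ns: "ns \<in> Tbar_tuples r n"
    by auto
  then have "\<forall>x\<in>set ns. x < m"
    using sorted_wrt_less_le_last[of ns] unfolding Tbar_tuples_def by fastforce
  then show "ys \<in> Tbar_tuples (Suc r) m"
    using ns \<open>n < m\<close> unfolding Tbar_tuples_def ys by (auto simp: sorted_wrt_append)
qed

lemma sum_Tbar_tuples_eq_Tbar_coeff:
  assumes "r \<ge> 1"
  shows "(\<Sum>ns\<in>Tbar_tuples r m. 1 / (\<Prod>j<r. 2 * real (ns ! j) - real (j + 1))) = Tbar_coeff r m"
  using assms
proof (induction r arbitrary: m rule: nat_induct_at_least)
  case base
  then show ?case by (simp add: Tbar_tuples_1)
next
  case (Suc r)
  let ?P = "\<lambda>r ns. \<Prod>j<r. 2 * real (ns ! j) - real (j + 1)"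
  have prod_snoc: "?P (Suc r) (ns @ [m]) = ?P r ns * (2 * real m - real (Suc r))"
    if "length ns = r" for ns
    using that by (simp add: nth_append cong: prod.cong_simp)
  have "(\<Sum>ns\<in>Tbar_tuples (Suc r) m. 1 / ?P (Suc r) ns)
      = (\<Sum>ns\<in>(\<Union>n<m. Tbar_tuples r n). 1 / ?P (Suc r) (ns @ [m]))"
    unfolding Tbar_tuples_Suc[OF Suc.hyps] by (subst sum.reindex) (auto intro: inj_onI)
  also have "\<dots> = (\<Sum>n<m. \<Sum>ns\<in>Tbar_tuples r n. 1 / ?P (Suc r) (ns @ [m]))"
    by (rule sum.UNION_disjoint) (auto simp: finite_Tbar_tuples, auto simp: Tbar_tuples_def)
  also have "\<dots> = (\<Sum>n<m. (\<Sum>ns\<in>Tbar_tuples r n. 1 / ?P r ns) / (2 * real m - real (Suc r)))"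
    unfolding sum_divide_distrib
  proof (intro sum.cong refl)
    fix n ns assume "ns \<in> Tbar_tuples r n"
    then show "1 / ?P (Suc r) (ns @ [m]) = 1 / ?P r ns / (2 * real m - real (Suc r))"
      using prod_snoc[of ns] by (simp add: Tbar_tuples_def)
  qed
  also have "\<dots> = Tbar_coeff (Suc r) m"
    unfolding Suc.IH by (simp add: sum_divide_distrib)
  finally show ?case .
qed

lemma Tbar_term_eq:
  assumes "r \<ge> 1"
  shows "Tbar_term r m = 2 ^ r * ((-1) ^ m * Tbar_coeff r m)"
proof -
  have "Tbar_term r m
      = 2 ^ r * ((-1) ^ m * (\<Sum>ns\<in>Tbar_tuples r m. 1 / (\<Prod>j<r. 2 * real (ns ! j) - real (j + 1))))"
    unfolding Tbar_term_def by (simp add: sum_distrib_left)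
  then show ?thesis
    using sum_Tbar_tuples_eq_Tbar_coeff[OF assms] by simp
qed

definition Tbar_coeff_sum :: "nat \<Rightarrow> nat \<Rightarrow> real" where
  "Tbar_coeff_sum r N = (\<Sum>n<N. Tbar_coeff r n)"

definition Tbar_poly :: "nat \<Rightarrow> nat \<Rightarrow> real \<Rightarrow> real" where
  "Tbar_poly r N t = (\<Sum>m<N. (-1) ^ m * Tbar_coeff r m * t ^ (2 * m - r))"

definition Tbar_poly_deriv :: "nat \<Rightarrow> nat \<Rightarrow> real \<Rightarrow> real" where
  "Tbar_poly_deriv r N t = (\<Sum>m<N. (-1) ^ m * Tbar_coeff r m * (real (2 * m - r) * t ^ (2 * m - Suc r)))"

definition arctan_power :: "nat \<Rightarrow> real \<Rightarrow> real" where
  "arctan_power r t = (- arctan t) ^ r / fact r"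

lemma Tbar_coeff_Suc_eq: "Tbar_coeff (Suc r) m = Tbar_coeff_sum r m / (2 * real m - real (Suc r))"
  by (simp add: Tbar_coeff_sum_def)

lemma Tbar_coeff_sum_nonneg: "Tbar_coeff_sum r N \<ge> 0"
  unfolding Tbar_coeff_sum_def by (intro sum_nonneg Tbar_coeff_nonneg)

lemma has_real_derivative_Tbar_poly: "(Tbar_poly r N has_real_derivative Tbar_poly_deriv r N t) (at t)"
proof -
  have "((\<lambda>t. \<Sum>m<N. (-1) ^ m * Tbar_coeff r m * t ^ (2 * m - r)) has_real_derivative
      (\<Sum>m<N. (-1) ^ m * Tbar_coeff r m * (real (2 * m - r) * t ^ (2 * m - Suc r)))) (at t)"
    by (intro DERIV_sum DERIV_cmult DERIV_pow[THEN DERIV_cong]) simp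
  then show ?thesis
    unfolding Tbar_poly_def[abs_def] Tbar_poly_deriv_def .
qed

lemma has_real_derivative_arctan_power:
  "(arctan_power (Suc r) has_real_derivative - arctan_power r t / (1 + t\<^sup>2)) (at t)"
proof -
  have "((\<lambda>t. (- arctan t) ^ Suc r / fact (Suc r)) has_real_derivative
      real (Suc r) * (- arctan t) ^ r * (- inverse (1 + t\<^sup>2)) / fact (Suc r)) (at t)"
    by (intro derivative_eq_intros DERIV_arctan) (auto simp: add.commute)
  moreover have "real (Suc r) * (- arctan t) ^ r * (- inverse (1 + t\<^sup>2)) / fact (Suc r)
      = - arctan_power r t / (1 + t\<^sup>2)"
    by (simp add: arctan_power_def divide_simps add_pos_nonneg)
  ultimately show ?thesis
    unfolding arctan_power_def[abs_def] by simp
qed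

lemma Tbar_poly_Suc_at_0: "Tbar_poly (Suc r) N 0 = 0"
  unfolding Tbar_poly_def
proof (intro sum.neutral ballI)
  fix m assume "m \<in> {..<N}"
  show "(-1) ^ m * Tbar_coeff (Suc r) m * 0 ^ (2 * m - Suc r) = (0 :: real)"
    by (cases "m < Suc r") (simp_all add: Tbar_coeff_eq_0)
qed

lemma Tbar_poly_0: "Tbar_poly 0 (Suc N) t = 1"
  by (induction N) (simp_all add: Tbar_poly_def)

lemma Tbar_poly_deriv_Suc_eq:
  "(1 + t\<^sup>2) * Tbar_poly_deriv (Suc r) (Suc N) t
     = - Tbar_poly r N t + (-1) ^ N * t ^ (2 * N - r) * Tbar_coeff_sum r N"
proof (induction N)
  case 0
  then show ?case by (simp add: Tbar_poly_def Tbar_poly_deriv_def Tbar_coeff_sum_def)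
next
  case (Suc N)
  show ?case
  proof (cases "N < r")
    case True
    then have "Tbar_coeff r N = 0" "Tbar_coeff_sum r N = 0" "Tbar_coeff (Suc r) (Suc N) = 0"
      by (auto simp: Tbar_coeff_sum_def Tbar_coeff_eq_0 intro!: sum.neutral)
    then show ?thesis
      using Suc by (simp add: Tbar_poly_def Tbar_poly_deriv_def Tbar_coeff_sum_def del: Tbar_coeff.simps)
  next
    case False
    define k where "k = 2 * N - r"
    have exponents: "2 * Suc N - Suc r = Suc k" "2 * Suc N - Suc (Suc r) = k" "2 * Suc N - r = k + 2"
      using False unfolding k_def by auto
    have coeff: "Tbar_coeff (Suc r) (Suc N) * real (Suc k) = Tbar_coeff_sum r (Suc N)"
      using False unfolding Tbar_coeff_Suc_eq k_def by (simp add: of_nat_diff)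
    have "(1 + t\<^sup>2) * Tbar_poly_deriv (Suc r) (Suc (Suc N)) t
        = (1 + t\<^sup>2) * Tbar_poly_deriv (Suc r) (Suc N) t
          + (1 + t\<^sup>2) * ((-1) ^ Suc N * (Tbar_coeff (Suc r) (Suc N) * real (Suc k)) * t ^ k)"
      unfolding Tbar_poly_deriv_def sum.lessThan_Suc[of _ "Suc N"] exponents
      by (simp add: algebra_simps del: of_nat_Suc Tbar_coeff.simps)
    also have "\<dots> = - Tbar_poly r N t + (-1) ^ N * t ^ k * Tbar_coeff_sum r N
          + (1 + t\<^sup>2) * ((-1) ^ Suc N * Tbar_coeff_sum r (Suc N) * t ^ k)"
      using Suc coeff unfolding k_def by simp
    also have "\<dots> = - Tbar_poly r (Suc N) t + (-1) ^ Suc N * t ^ (2 * Suc N - r) * Tbar_coeff_sum r (Suc N)"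
      unfolding Tbar_poly_def Tbar_coeff_sum_def sum.lessThan_Suc[of _ N] exponents k_def
      by (simp add: power2_eq_square algebra_simps del: Tbar_coeff.simps)
    finally show ?thesis .
  qed
qed

text \<open>The term \<open>n = 0\<close> is \<open>1 / 0 = 0\<close>.\<close>
lemma sum_inverse_sqrt_le: "(\<Sum>n\<le>N. 1 / sqrt (real n)) \<le> 2 * sqrt (real N)"
proof (induction N)
  case 0
  then show ?case by simp
next
  case (Suc N)
  define u where "u = sqrt (real (Suc N))"
  have "u > 0"
    unfolding u_def by simp
  have "sqrt (real N * real (Suc N)) \<le> (real N + real (Suc N)) / 2"
    by (rule arith_geo_mean_sqrt) auto
  then have "2 * sqrt (real N) * u + 1 \<le> 2 * u\<^sup>2"
    unfolding u_def by (simp add: real_sqrt_mult)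
  then have "2 * sqrt (real N) + 1 / u \<le> 2 * u"
    using \<open>u > 0\<close> by (simp add: field_simps power2_eq_square)
  then show ?case
    using Suc.IH unfolding u_def by simp
qed

lemma Tbar_coeff_sum_le_sqrt: "\<exists>K \<ge> 0. \<forall>N. Tbar_coeff_sum r N \<le> K * sqrt (real N)"
proof (induction r)
  case 0
  have "Tbar_coeff_sum 0 N \<le> 1 * sqrt (real N)" for N
    by (cases N) (simp_all add: Tbar_coeff_sum_def sum.lessThan_Suc_shift del: sum.lessThan_Suc)
  then show ?case
    by (intro exI[of _ 1]) auto
next
  case (Suc r)
  then obtain K where "K \<ge> 0" and K: "\<And>N. Tbar_coeff_sum r N \<le> K * sqrt (real N)"
    by auto
  \<comment> \<open>For \<open>n = 0\<close> both sides vanish.\<close>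
  have coeff_le: "Tbar_coeff (Suc r) n \<le> K * (1 / sqrt (real n))" for n
  proof (cases "n < Suc r")
    case True
    then show ?thesis using \<open>K \<ge> 0\<close> by (simp add: Tbar_coeff_eq_0)
  next
    case False
    then have "real n > 0" "2 * real n - real (Suc r) \<ge> real n"
      by auto
    then have "Tbar_coeff (Suc r) n \<le> Tbar_coeff_sum r n / real n"
      unfolding Tbar_coeff_Suc_eq by (intro divide_left_mono Tbar_coeff_sum_nonneg) auto
    also have "\<dots> \<le> K * sqrt (real n) / real n"
      using K \<open>real n > 0\<close> by (intro divide_right_mono) auto
    also have "\<dots> = K * (1 / sqrt (real n))"
      using \<open>real n > 0\<close> by (simp add: field_simps flip: real_sqrt_mult)
    finally show ?thesis .
  qed
  have "Tbar_coeff_sum (Suc r) N \<le> (2 * K) * sqrt (real N)" for N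
  proof -
    have "Tbar_coeff_sum (Suc r) N \<le> (\<Sum>n<N. K * (1 / sqrt (real n)))"
      unfolding Tbar_coeff_sum_def by (intro sum_mono coeff_le)
    also have "\<dots> \<le> (\<Sum>n\<le>N. K * (1 / sqrt (real n)))"
      using \<open>K \<ge> 0\<close> by (intro sum_mono2) auto
    also have "\<dots> \<le> K * (2 * sqrt (real N))"
      unfolding sum_distrib_left[symmetric] using \<open>K \<ge> 0\<close> by (intro mult_left_mono sum_inverse_sqrt_le)
    finally show ?thesis by simp
  qed
  then show ?case
    using \<open>K \<ge> 0\<close> by (intro exI[of _ "2 * K"]) auto
qed

lemma Tbar_coeff_sum_over_degree_tendsto_0:
  "(\<lambda>N. Tbar_coeff_sum r N / (real (2 * N - r) + 1)) \<longlonglongrightarrow> 0"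
proof -
  obtain K where K: "\<And>N. Tbar_coeff_sum r N \<le> K * sqrt (real N)"
    using Tbar_coeff_sum_le_sqrt by blast
  have "(\<lambda>N. K * inverse (sqrt (real N))) \<longlonglongrightarrow> 0"
    by (intro tendsto_mult_right_zero tendsto_inverse_0_at_top
        filterlim_compose[OF sqrt_at_top filterlim_real_sequentially])
  moreover have "\<forall>\<^sub>F N in sequentially.
      norm (Tbar_coeff_sum r N / (real (2 * N - r) + 1)) \<le> K * inverse (sqrt (real N))"
  proof (rule eventually_sequentiallyI)
    fix N assume "N \<ge> Suc r"
    then have "real N > 0" "real (2 * N - r) + 1 \<ge> real N"
      by auto
    then have "Tbar_coeff_sum r N / (real (2 * N - r) + 1) \<le> Tbar_coeff_sum r N / real N"
      by (intro divide_left_mono Tbar_coeff_sum_nonneg) auto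
    also have "\<dots> \<le> K * sqrt (real N) / real N"
      using K \<open>real N > 0\<close> by (intro divide_right_mono) auto
    also have "\<dots> = K * inverse (sqrt (real N))"
      using \<open>real N > 0\<close> by (simp add: field_simps flip: real_sqrt_mult)
    finally show "norm (Tbar_coeff_sum r N / (real (2 * N - r) + 1)) \<le> K * inverse (sqrt (real N))"
      using Tbar_coeff_sum_nonneg by simp
  qed
  ultimately show ?thesis
    by (rule Lim_null_comparison[rotated])
qed

lemma abs_diff_le_of_abs_deriv_le:
  fixes f g f' g' :: "real \<Rightarrow> real"
  assumes "a \<le> b"
    and f: "\<And>x. a \<le> x \<Longrightarrow> x \<le> b \<Longrightarrow> (f has_real_derivative f' x) (at x)"
    and g: "\<And>x. a \<le> x \<Longrightarrow> x \<le> b \<Longrightarrow> (g has_real_derivative g' x) (at x)"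
    and le: "\<And>x. a \<le> x \<Longrightarrow> x \<le> b \<Longrightarrow> \<bar>f' x\<bar> \<le> g' x"
  shows "\<bar>f b - f a\<bar> \<le> g b - g a"
proof -
  have "(\<lambda>x. g x - f x) a \<le> (\<lambda>x. g x - f x) b"
    using \<open>a \<le> b\<close>
  proof (rule DERIV_nonneg_imp_nondecreasing)
    fix x assume "a \<le> x" "x \<le> b"
    then show "\<exists>y. ((\<lambda>x. g x - f x) has_real_derivative y) (at x) \<and> 0 \<le> y"
      using DERIV_diff[OF g f] le by (fastforce simp: abs_le_iff)
  qed
  moreover have "(\<lambda>x. g x + f x) a \<le> (\<lambda>x. g x + f x) b"
    using \<open>a \<le> b\<close>
  proof (rule DERIV_nonneg_imp_nondecreasing)
    fix x assume "a \<le> x" "x \<le> b"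
    then show "\<exists>y. ((\<lambda>x. g x + f x) has_real_derivative y) (at x) \<and> 0 \<le> y"
      using DERIV_add[OF g f] le by (fastforce simp: abs_le_iff)
  qed
  ultimately show ?thesis by (simp add: abs_le_iff)
qed

lemma Tbar_poly_Suc_error_le:
  assumes err: "\<forall>s\<in>{0..1}. \<bar>Tbar_poly r N s - arctan_power r s\<bar> \<le> e"
    and t: "t \<in> {0..1}"
  shows "\<bar>Tbar_poly (Suc r) (Suc N) t - arctan_power (Suc r) t\<bar>
    \<le> e + Tbar_coeff_sum r N / (real (2 * N - r) + 1)"
proof -
  define k where "k = 2 * N - r"
  define c where "c = Tbar_coeff_sum r N"
  define D where "D s = Tbar_poly (Suc r) (Suc N) s - arctan_power (Suc r) s" for s
  define D' where "D' s = Tbar_poly_deriv (Suc r) (Suc N) s + arctan_power r s / (1 + s\<^sup>2)" for s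
  have "c \<ge> 0" "e \<ge> 0"
    using Tbar_coeff_sum_nonneg err unfolding c_def by force+
  have D': "(D has_real_derivative D' s) (at s)" for s
    using DERIV_diff[OF has_real_derivative_Tbar_poly has_real_derivative_arctan_power]
    unfolding D_def[abs_def] D'_def by simp
  have D'_le: "\<bar>D' s\<bar> \<le> e + c * s ^ k" if s: "0 \<le> s" "s \<le> 1" for s
  proof -
    have "1 + s\<^sup>2 > 0"
      by (simp add: add_pos_nonneg)
    have "\<bar>D' s\<bar> \<le> (1 + s\<^sup>2) * \<bar>D' s\<bar>"
      by (simp add: distrib_right)
    also have "\<dots> = \<bar>(1 + s\<^sup>2) * D' s\<bar>"
      using \<open>1 + s\<^sup>2 > 0\<close> by (simp add: abs_mult)
    also have "(1 + s\<^sup>2) * D' s = (1 + s\<^sup>2) * Tbar_poly_deriv (Suc r) (Suc N) s + arctan_power r s"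
      using \<open>1 + s\<^sup>2 > 0\<close> unfolding D'_def by (simp add: distrib_left)
    also have "\<dots> = - (Tbar_poly r N s - arctan_power r s) + (-1) ^ N * s ^ k * c"
      unfolding Tbar_poly_deriv_Suc_eq k_def c_def by simp
    also have "\<bar>- (Tbar_poly r N s - arctan_power r s) + (-1) ^ N * s ^ k * c\<bar>
        \<le> \<bar>Tbar_poly r N s - arctan_power r s\<bar> + c * s ^ k"
      by (rule order_trans[OF abs_triangle_ineq]) (use s \<open>c \<ge> 0\<close> in \<open>simp add: abs_mult\<close>)
    also have "\<dots> \<le> e + c * s ^ k"
      using err s by simp
    finally show ?thesis .
  qed
  have "D 0 = 0"
    unfolding D_def by (simp add: Tbar_poly_Suc_at_0 arctan_power_def)
  then have "\<bar>D t\<bar> = \<bar>D t - D 0\<bar>"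
    by simp
  also have "\<dots> \<le> (e * t + c / Suc k * t ^ Suc k) - (e * 0 + c / Suc k * 0 ^ Suc k)"
    using t
  proof (intro abs_diff_le_of_abs_deriv_le[where f' = D'] D' D'_le)
    fix x
    have "((\<lambda>x. e * x + c / Suc k * x ^ Suc k) has_real_derivative
        e * 1 + c / Suc k * (real (Suc k) * x ^ (Suc k - Suc 0))) (at x)"
      by (intro DERIV_add DERIV_cmult DERIV_ident DERIV_pow)
    then show "((\<lambda>x. e * x + c / Suc k * x ^ Suc k) has_real_derivative e + c * x ^ k) (at x)"
      by (simp del: of_nat_Suc)
  qed (auto intro!: D'_le)
  also have "\<dots> \<le> e + c / Suc k"
    using mult_left_le[of t e] mult_left_le[of "t ^ Suc k" "c / Suc k"] power_le_one[of t "Suc k"]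
      t \<open>c \<ge> 0\<close> \<open>e \<ge> 0\<close>
    by simp
  finally show ?thesis
    unfolding D_def k_def c_def by (simp add: add.commute)
qed

lemma uniform_limit_Tbar_poly: "uniform_limit {0..1} (Tbar_poly r) (arctan_power r) sequentially"
proof (induction r)
  case 0
  show ?case
    by (rule uniform_limitI, subst eventually_sequentially_Suc[symmetric])
      (simp add: Tbar_poly_0 arctan_power_def)
next
  case (Suc r)
  show ?case
  proof (rule uniform_limitI)
    fix \<epsilon> :: real assume "\<epsilon> > 0"
    have "\<forall>\<^sub>F N in sequentially. \<forall>t\<in>{0..1}. dist (Tbar_poly r N t) (arctan_power r t) < \<epsilon> / 2"
      using Suc.IH \<open>\<epsilon> > 0\<close> by (intro uniform_limitD) auto
    moreover have "\<forall>\<^sub>F N in sequentially. Tbar_coeff_sum r N / (real (2 * N - r) + 1) < \<epsilon> / 2"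
      by (rule order_tendstoD(2)[OF Tbar_coeff_sum_over_degree_tendsto_0]) (use \<open>\<epsilon> > 0\<close> in simp)
    ultimately have "\<forall>\<^sub>F N in sequentially.
        \<forall>t\<in>{0..1}. dist (Tbar_poly (Suc r) (Suc N) t) (arctan_power (Suc r) t) < \<epsilon>"
    proof eventually_elim
      case (elim N)
      show ?case
      proof
        fix t :: real assume "t \<in> {0..1}"
        then have "\<bar>Tbar_poly (Suc r) (Suc N) t - arctan_power (Suc r) t\<bar>
            \<le> \<epsilon> / 2 + Tbar_coeff_sum r N / (real (2 * N - r) + 1)"
          using elim(1) by (intro Tbar_poly_Suc_error_le) (auto simp: dist_real_def less_imp_le)
        then show "dist (Tbar_poly (Suc r) (Suc N) t) (arctan_power (Suc r) t) < \<epsilon>"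
          using elim(2) unfolding dist_real_def by linarith
      qed
    qed
    then show "\<forall>\<^sub>F N in sequentially. \<forall>t\<in>{0..1}. dist (Tbar_poly (Suc r) N t) (arctan_power (Suc r) t) < \<epsilon>"
      by (subst eventually_sequentially_Suc[symmetric])
  qed
qed

lemma sums_Tbar_coeff: "(\<lambda>m. (-1) ^ m * Tbar_coeff r m) sums arctan_power r 1"
proof -
  have "(\<lambda>N. Tbar_poly r N 1) \<longlonglongrightarrow> arctan_power r 1"
    by (rule tendsto_uniform_limitI[OF uniform_limit_Tbar_poly]) simp
  then show ?thesis
    unfolding sums_def Tbar_poly_def by simp
qed

theorem mainTheorem7:
  fixes r :: nat
  assumes "r \<ge> 1"
  shows "Tbar_term r sums ((-1) ^ r / fact r * (pi / 2) ^ r)"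
proof -
  have "Tbar_term r = (\<lambda>m. 2 ^ r * ((-1) ^ m * Tbar_coeff r m))"
    using Tbar_term_eq[OF assms] by blast
  moreover have "(\<lambda>m. 2 ^ r * ((-1) ^ m * Tbar_coeff r m)) sums (2 ^ r * arctan_power r 1)"
    by (intro sums_mult sums_Tbar_coeff)
  moreover have "2 ^ r * arctan_power r 1 = (-1) ^ r / fact r * (pi / 2) ^ r"
    by (simp add: arctan_power_def arctan_one flip: power_mult_distrib)
  ultimately show ?thesis
    by simp
qed

end
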